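(* Let $\Sigma$ be a labeled graph over $\mathcal B$, let $\alpha\in\mathrm{Aut}(F(\mathcal B))$, and let $\sigma$ be an immersed edge path in $\alpha\Sigma$. Then there are an immersed edge path $\hat\sigma=e_0\cdots e_m$ in $\Sigma$, an initial edge subpath $\sigma_0$ of $\alpha(e_0)$, and a terminal edge subpath $\sigma_m$ of $\alpha(e_m)$ such that $\sigma_0\neq\alpha(e_0)$, $\sigma_m\neq\alpha(e_m)$, and $\alpha(\hat\sigma)$ is the immersed edge path $\sigma_0\sigma\sigma_m$.
   Context: $F(\mathcal B)$ is the free group on the finite set $\mathcal B$. A labeled graph assigns to each oriented edge a label in $\mathcal B^{\pm1}$, with $e^{-1}$ carrying the inverse label. For $\alpha\in\mathrm{Aut}(F(\mathcal B))$, the labeled graph $\alpha\Sigma$ is obtained from $\Sigma$ by replacing each oriented edge $e$ with label $c$ by a path $\alpha(e)$ of $k$ subedges, where $\alpha(c)$ is the reduced word $c_1^{\delta_1}\cdots c_k^{\delta_k}$ ($c_i\in\mathcal B$, $\delta_i=\pm1$), the $i$-th subedge being labeled $c_i$ and oriented along $e$ if $\delta_i=1$ and oppositely otherwise; $\alpha$ of an edge path is the concatenation of the $\alpha(e_i)$. An edge path is a sequence of oriented edges $e_0\cdots e_m$ with $\partial_1e_{i-1}=\partial_0e_i$; it is immersed if no $e_{i}=e_{i-1}^{-1}$. *)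

theory Defs
  imports Main "HOL-Library.Sublist"
begin

text \<open>A letter of B^{+-1} is a pair (b, s); s = True means b, s = False means b^{-1}.\<close>
type_synonym 'b letter = "'b \<times> bool"

definition inv_letter :: "'b letter \<Rightarrow> 'b letter" where
  "inv_letter x = (fst x, \<not> snd x)"

definition inv_word :: "'b letter list \<Rightarrow> 'b letter list" where
  "inv_word w = rev (map inv_letter w)"

definition reduced :: "'b letter list \<Rightarrow> bool" where
  "reduced w \<longleftrightarrow> (\<forall>i. Suc i < length w \<longrightarrow> w ! Suc i \<noteq> inv_letter (w ! i))"

fun reduce :: "'b letter list \<Rightarrow> 'b letter list" where
  "reduce [] = []"
| "reduce (x # w) = (case reduce w of
       [] \<Rightarrow> [x]
     | y # w' \<Rightarrow> (if y = inv_letter x then w' else x # y # w'))"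

text \<open>An endomorphism of F(B) is given by the reduced images of the generators;
  img phi c is the reduced word alpha(c) for c in B^{+-1}.\<close>
definition img :: "('b \<Rightarrow> 'b letter list) \<Rightarrow> 'b letter \<Rightarrow> 'b letter list" where
  "img \<phi> c = (if snd c then \<phi> (fst c) else inv_word (\<phi> (fst c)))"

definition ext_hom :: "('b \<Rightarrow> 'b letter list) \<Rightarrow> 'b letter list \<Rightarrow> 'b letter list" where
  "ext_hom \<phi> w = reduce (concat (map (img \<phi>) w))"

definition is_aut :: "('b \<Rightarrow> 'b letter list) \<Rightarrow> bool" where
  "is_aut \<phi> \<longleftrightarrow> (\<forall>b. reduced (\<phi> b)) \<and>
     bij_betw (ext_hom \<phi>) {w. reduced w} {w. reduced w}"

record ('v, 'e, 'b) lgraph =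
  verts :: "'v set"
  edges :: "'e set"
  einv :: "'e \<Rightarrow> 'e"
  org :: "'e \<Rightarrow> 'v"
  ter :: "'e \<Rightarrow> 'v"
  lab :: "'e \<Rightarrow> 'b letter"

definition labeled_graph :: "('v, 'e, 'b) lgraph \<Rightarrow> bool" where
  "labeled_graph G \<longleftrightarrow>
     (\<forall>e\<in>edges G. einv G e \<in> edges G \<and> einv G (einv G e) = e \<and> einv G e \<noteq> e
        \<and> org G e \<in> verts G \<and> ter G e = org G (einv G e)
        \<and> lab G (einv G e) = inv_letter (lab G e))"

definition edge_path :: "('v, 'e, 'b) lgraph \<Rightarrow> 'e list \<Rightarrow> bool" where
  "edge_path G p \<longleftrightarrow> p \<noteq> [] \<and> set p \<subseteq> edges G \<and>
     (\<forall>i. Suc i < length p \<longrightarrow> ter G (p ! i) = org G (p ! Suc i))"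

definition immersed :: "('v, 'e, 'b) lgraph \<Rightarrow> 'e list \<Rightarrow> bool" where
  "immersed G p \<longleftrightarrow> edge_path G p \<and>
     (\<forall>i. Suc i < length p \<longrightarrow> p ! Suc i \<noteq> einv G (p ! i))"

definition klen :: "('b \<Rightarrow> 'b letter list) \<Rightarrow> ('v, 'e, 'b) lgraph \<Rightarrow> 'e \<Rightarrow> nat" where
  "klen \<phi> G e = length (img \<phi> (lab G e))"

text \<open>The oriented edge (e, i) of alpha Sigma is the i-th subedge of alpha(e), traversed
  in the direction of e; its label is the i-th letter of alpha(lab e).  New (interior) vertices are represented canonically by
  the set {(e, j), (e^{-1}, k - j)}, the point after j subedges of alpha(e).\<close>
definition subdiv :: "('b \<Rightarrow> 'b letter list) \<Rightarrow> ('v, 'e, 'b) lgraph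
     \<Rightarrow> ('v + ('e \<times> nat) set, 'e \<times> nat, 'b) lgraph" where
  "subdiv \<phi> G =
    \<lparr> verts = Inl ` verts G \<union>
        {Inr {(e, j), (einv G e, klen \<phi> G e - j)} | e j. e \<in> edges G \<and> 0 < j \<and> j < klen \<phi> G e},
      edges = {(e, i). e \<in> edges G \<and> i < klen \<phi> G e},
      einv = (\<lambda>(e, i). (einv G e, klen \<phi> G e - 1 - i)),
      org = (\<lambda>(e, i). if i = 0 then Inl (org G e)
                      else Inr {(e, i), (einv G e, klen \<phi> G e - i)}),
      ter = (\<lambda>(e, i). if Suc i = klen \<phi> G e then Inl (ter G e)
                      else Inr {(e, Suc i), (einv G e, klen \<phi> G e - Suc i)}),
      lab = (\<lambda>(e, i). img \<phi> (lab G e) ! i) \<rparr>"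

definition sub_edge_path :: "('b \<Rightarrow> 'b letter list) \<Rightarrow> ('v, 'e, 'b) lgraph \<Rightarrow> 'e \<Rightarrow> ('e \<times> nat) list" where
  "sub_edge_path \<phi> G e = map (\<lambda>i. (e, i)) [0..<klen \<phi> G e]"

definition sub_path :: "('b \<Rightarrow> 'b letter list) \<Rightarrow> ('v, 'e, 'b) lgraph \<Rightarrow> 'e list \<Rightarrow> ('e \<times> nat) list" where
  "sub_path \<phi> G p = concat (map (sub_edge_path \<phi> G) p)"

end

theory Submission
  imports Defs
begin

text \<open>
  Call an immersed path \<open>h\<close> of \<open>\<Sigma>\<close> a lift of a path \<open>\<sigma>\<close> of \<open>\<alpha>\<Sigma>\<close> if \<open>\<alpha>(h)\<close> is \<open>\<sigma>\<close> extended by a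
  proper initial piece of the first and a proper terminal piece of the last subdivided edge.
  Lifts are built by prepending the edges of \<open>\<sigma>\<close> one at a time: a new edge \<open>(e, i)\<close> entering
  the first edge of the current lift is either the previous subedge of the same \<open>\<alpha>(e)\<close>, or it
  is the last subedge of \<open>\<alpha>(e)\<close> and enters at an old vertex, where \<open>e\<close> can be prepended to the
  lift without backtracking because \<open>\<sigma>\<close> does not backtrack.  Finally \<open>\<alpha>\<close> maps immersed
  paths to immersed paths, since an automorphism sends no generator to the empty word.
\<close>

lemma successively_iff_nth:
  "successively P xs \<longleftrightarrow> (\<forall>i. Suc i < length xs \<longrightarrow> P (xs ! i) (xs ! Suc i))"
proof (induction xs)
  case (Cons x xs)
  then show ?case
    by (cases xs) (auto simp: nth_Cons less_Suc_eq_0_disj split: nat.split)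
qed simp

lemma immersed_iff_successively:
  "immersed G p \<longleftrightarrow> p \<noteq> [] \<and> set p \<subseteq> edges G \<and>
     successively (\<lambda>x y. ter G x = org G y \<and> y \<noteq> einv G x) p"
  by (auto simp: immersed_def edge_path_def successively_iff_nth)

lemma immersed_singleton: "immersed G [x] \<longleftrightarrow> x \<in> edges G"
  by (simp add: immersed_iff_successively)

lemma immersed_Cons:
  assumes "p \<noteq> []"
  shows "immersed G (x # p) \<longleftrightarrow>
    x \<in> edges G \<and> ter G x = org G (hd p) \<and> hd p \<noteq> einv G x \<and> immersed G p"
  using assms by (auto simp: immersed_iff_successively successively_Cons)

lemma immersed_append:
  assumes "p \<noteq> []" "q \<noteq> []"
  shows "immersed G (p @ q) \<longleftrightarrow> immersed G p \<and> immersed G q \<and>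
    ter G (last p) = org G (hd q) \<and> hd q \<noteq> einv G (last p)"
  using assms by (auto simp: immersed_iff_successively successively_append_iff)

lemma is_aut_image_nonempty:
  assumes "is_aut \<phi>"
  shows "\<phi> b \<noteq> []"
proof
  assume "\<phi> b = []"
  then have "ext_hom \<phi> [(b, True)] = ext_hom \<phi> []"
    by (simp add: ext_hom_def img_def)
  moreover have "inj_on (ext_hom \<phi>) {w. reduced w}"
    using assms by (simp add: is_aut_def bij_betw_def)
  ultimately show False
    by (auto simp: reduced_def dest: inj_onD)
qed

lemma klen_pos: "is_aut \<phi> \<Longrightarrow> 0 < klen \<phi> G e"
  by (simp add: klen_def img_def inv_word_def is_aut_image_nonempty)

lemma subdiv_simps:
  "edges (subdiv \<phi> G) = {(e, i). e \<in> edges G \<and> i < klen \<phi> G e}"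
  "einv (subdiv \<phi> G) (e, i) = (einv G e, klen \<phi> G e - 1 - i)"
  "org (subdiv \<phi> G) (e, i) =
     (if i = 0 then Inl (org G e) else Inr {(e, i), (einv G e, klen \<phi> G e - i)})"
  "ter (subdiv \<phi> G) (e, i) =
     (if Suc i = klen \<phi> G e then Inl (ter G e)
      else Inr {(e, Suc i), (einv G e, klen \<phi> G e - Suc i)})"
  by (simp_all add: subdiv_def)

lemma length_sub_edge_path [simp]: "length (sub_edge_path \<phi> G e) = klen \<phi> G e"
  by (simp add: sub_edge_path_def)

lemma nth_sub_edge_path [simp]: "i < klen \<phi> G e \<Longrightarrow> sub_edge_path \<phi> G e ! i = (e, i)"
  by (simp add: sub_edge_path_def)

lemma sub_path_Cons [simp]: "sub_path \<phi> G (e # p) = sub_edge_path \<phi> G e @ sub_path \<phi> G p"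
  by (simp add: sub_path_def)

lemma sub_edge_path_split:
  assumes "(e, i) \<in> edges (subdiv \<phi> G)"
  shows "sub_edge_path \<phi> G e =
    take i (sub_edge_path \<phi> G e) @ (e, i) # drop (Suc i) (sub_edge_path \<phi> G e)"
  using assms id_take_nth_drop[of i "sub_edge_path \<phi> G e"] by (simp add: subdiv_simps)

lemma sub_edge_path_immersed:
  assumes "labeled_graph G" "e \<in> edges G" "0 < klen \<phi> G e"
  shows "immersed (subdiv \<phi> G) (sub_edge_path \<phi> G e)"
proof -
  have "einv G e \<noteq> e"
    using assms(1,2) by (simp add: labeled_graph_def)
  then show ?thesis
    using assms(2,3) by (auto simp: immersed_def edge_path_def subdiv_simps sub_edge_path_def)
qed

text \<open>Interior vertices of \<open>\<alpha>(e)\<close> have valence two, so a path can only leave the subedge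
  \<open>(e, i)\<close> forwards along \<open>\<alpha>(e)\<close>, or through the old vertex at the end of \<open>\<alpha>(e)\<close>.\<close>
lemma subdiv_adjacent_edges:
  assumes "ter (subdiv \<phi> G) (e, i) = org (subdiv \<phi> G) (e', i')"
    and "(e', i') \<noteq> einv (subdiv \<phi> G) (e, i)"
  shows "e' = e \<and> i' = Suc i \<or>
    Suc i = klen \<phi> G e \<and> i' = 0 \<and> ter G e = org G e' \<and> e' \<noteq> einv G e"
proof (cases "Suc i = klen \<phi> G e")
  case True
  then show ?thesis
    using assms by (auto simp: subdiv_simps split: if_splits)
next
  case False
  then have "i' \<noteq> 0"
    using assms(1) by (auto simp: subdiv_simps split: if_splits)
  with False assms(1)
  have "(e', i') \<in> {(e, Suc i), (einv G e, klen \<phi> G e - Suc i)}"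
    by (auto simp: subdiv_simps)
  then show ?thesis
    using assms(2) by (auto simp: subdiv_simps)
qed

lemma sub_path_immersed:
  assumes "labeled_graph G" "is_aut \<phi>" "immersed G p"
  shows "immersed (subdiv \<phi> G) (sub_path \<phi> G p)"
  using assms(3)
proof (induction p)
  case Nil
  then show ?case by (simp add: immersed_def edge_path_def)
next
  case (Cons e p)
  have ke: "0 < klen \<phi> G e"
    using klen_pos[OF assms(2)] .
  have "e \<in> edges G"
    using Cons.prems by (simp add: immersed_def edge_path_def)
  then have first: "immersed (subdiv \<phi> G) (sub_edge_path \<phi> G e)"
    using sub_edge_path_immersed[OF assms(1) _ ke] by blast
  show ?case
  proof (cases "p = []")
    case True
    then show ?thesis using first by (simp add: sub_path_def)
  next
    case False
    then obtain f q where p: "p = f # q"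
      by (cases p) auto
    have step: "ter G e = org G f" "f \<noteq> einv G e" and "immersed G p"
      using Cons.prems immersed_Cons[OF False, of G e] p by auto
    then have rest: "immersed (subdiv \<phi> G) (sub_path \<phi> G p)"
      using Cons.IH by blast
    have "0 < klen \<phi> G f"
      using klen_pos[OF assms(2)] .
    then have "sub_path \<phi> G p \<noteq> []" "hd (sub_path \<phi> G p) = (f, 0)"
      using p by (simp_all add: sub_edge_path_def upt_conv_Cons)
    moreover have "sub_edge_path \<phi> G e \<noteq> []"
      "last (sub_edge_path \<phi> G e) = (e, klen \<phi> G e - 1)"
      using ke by (simp_all add: sub_edge_path_def last_map)
    ultimately show ?thesis
      using first rest step ke by (simp add: immersed_append subdiv_simps)
  qed
qed

lemma sub_path_hd_of_factor:
  assumes "strict_prefix s0 (sub_edge_path \<phi> G f)"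
    and "sub_path \<phi> G (f # q) = s0 @ s @ sm" and "s \<noteq> []"
  shows "hd s = (f, length s0)"
proof -
  have "length s0 < klen \<phi> G f"
    using prefix_length_less[OF assms(1)] by simp
  then have "sub_path \<phi> G (f # q) ! length s0 = (f, length s0)"
    by (simp add: nth_append)
  then have "(s0 @ s @ sm) ! length s0 = (f, length s0)"
    unfolding assms(2) .
  then show ?thesis
    using assms(3) by (simp add: hd_conv_nth nth_append)
qed

definition is_lift :: "('b \<Rightarrow> 'b letter list) \<Rightarrow> ('v, 'e, 'b) lgraph \<Rightarrow> ('e \<times> nat) list
    \<Rightarrow> 'e list \<Rightarrow> bool" where
  "is_lift \<phi> G s h \<longleftrightarrow> immersed G h \<and>
     (\<exists>s0 sm. strict_prefix s0 (sub_edge_path \<phi> G (hd h))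
        \<and> strict_suffix sm (sub_edge_path \<phi> G (last h))
        \<and> sub_path \<phi> G h = s0 @ s @ sm)"

lemma is_lift_singleton:
  assumes "(e, i) \<in> edges (subdiv \<phi> G)"
  shows "is_lift \<phi> G [(e, i)] [e]"
proof -
  let ?A = "sub_edge_path \<phi> G e"
  have split: "?A = take i ?A @ (e, i) # drop (Suc i) ?A"
    using sub_edge_path_split[OF assms] .
  then have "strict_prefix (take i ?A) ?A"
    by (rule strict_prefixI')
  moreover have "strict_suffix (drop (Suc i) ?A) ?A"
  proof -
    have "length (drop (Suc i) ?A) < length ?A"
      using assms by (simp add: subdiv_simps)
    then show ?thesis
      by (metis strict_suffix_def suffix_drop less_irrefl)
  qed
  moreover have "immersed G [e]"
    using assms by (simp add: immersed_singleton subdiv_simps)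
  ultimately show ?thesis
    using split by (auto simp: is_lift_def sub_path_def)
qed

lemma is_lift_Cons:
  assumes lift: "is_lift \<phi> G s h" and "s \<noteq> []"
    and imm: "immersed (subdiv \<phi> G) ((e, i) # s)"
  shows "\<exists>h'. is_lift \<phi> G ((e, i) # s) h'"
proof -
  let ?A = "sub_edge_path \<phi> G"
  have edge: "(e, i) \<in> edges (subdiv \<phi> G)"
    and turn: "ter (subdiv \<phi> G) (e, i) = org (subdiv \<phi> G) (hd s)"
      "hd s \<noteq> einv (subdiv \<phi> G) (e, i)"
    using imm immersed_Cons[OF \<open>s \<noteq> []\<close>] by auto
  obtain s0 sm where h: "immersed G h" and s0: "strict_prefix s0 (?A (hd h))"
    and sm: "strict_suffix sm (?A (last h))" and sp: "sub_path \<phi> G h = s0 @ s @ sm"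
    using lift by (auto simp: is_lift_def)
  obtain f q where hf: "h = f # q"
    using h by (cases h) (auto simp: immersed_def edge_path_def)
  have hd_s: "hd s = (f, length s0)"
    using sub_path_hd_of_factor s0 sp hf \<open>s \<noteq> []\<close> by simp
  with subdiv_adjacent_edges[OF turn[unfolded hd_s]]
  consider (same_edge) "f = e" "length s0 = Suc i"
    | (new_edge) "Suc i = klen \<phi> G e" "s0 = []" "ter G e = org G f" "f \<noteq> einv G e"
    by auto
  then show ?thesis
  proof cases
    case same_edge
    have "s0 = take (Suc i) (?A e)"
      using s0 same_edge hf by (auto elim: strict_prefixE')
    also have "\<dots> = take i (?A e) @ [(e, i)]"
      using edge by (simp add: subdiv_simps take_Suc_conv_app_nth)
    finally have "sub_path \<phi> G h = take i (?A (hd h)) @ ((e, i) # s) @ sm"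
      using sp same_edge hf by simp
    then have "is_lift \<phi> G ((e, i) # s) h"
      using h sm strict_prefixI'[OF sub_edge_path_split[OF edge]] same_edge hf
      unfolding is_lift_def by auto
    then show ?thesis ..
  next
    case new_edge
    have "?A e = take i (?A e) @ [(e, i)]"
      using sub_edge_path_split[OF edge] new_edge by simp
    then have "sub_path \<phi> G (e # h) = take i (?A e) @ ((e, i) # s) @ sm"
      using sp new_edge by (metis append.assoc append_Cons append_Nil sub_path_Cons)
    moreover have "immersed G (e # h)"
      using h hf edge new_edge by (simp add: immersed_Cons subdiv_simps)
    moreover have "last (e # h) = last h"
      using hf by simp
    ultimately have "is_lift \<phi> G ((e, i) # s) (e # h)"
      using sm strict_prefixI'[OF sub_edge_path_split[OF edge]]
      unfolding is_lift_def by auto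
    then show ?thesis ..
  qed
qed

lemma immersed_subdiv_has_lift:
  "immersed (subdiv \<phi> G) s \<Longrightarrow> \<exists>h. is_lift \<phi> G s h"
proof (induction s)
  case Nil
  then show ?case by (simp add: immersed_def edge_path_def)
next
  case (Cons x s)
  obtain e i where x: "x = (e, i)" by (cases x)
  show ?case
  proof (cases "s = []")
    case True
    then have "(e, i) \<in> edges (subdiv \<phi> G)"
      using Cons.prems x by (simp add: immersed_singleton)
    then have "is_lift \<phi> G [x] [e]"
      using x by (simp add: is_lift_singleton)
    then show ?thesis
      using True by blast
  next
    case False
    then have "immersed (subdiv \<phi> G) s"
      using Cons.prems by (simp add: immersed_Cons)
    then obtain h where "is_lift \<phi> G s h"
      using Cons.IH by blast
    from is_lift_Cons[OF this False] show ?thesis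
      using Cons.prems x by simp
  qed
qed

theorem lemma9p3:
  fixes \<Sigma> :: "('v, 'e, 'b::finite) lgraph"
    and \<phi> :: "'b \<Rightarrow> 'b letter list"
    and \<sigma> :: "('e \<times> nat) list"
  assumes "labeled_graph \<Sigma>"
    and "is_aut \<phi>"
    and "immersed (subdiv \<phi> \<Sigma>) \<sigma>"
  shows "\<exists>\<sigma>h \<sigma>0 \<sigma>m. immersed \<Sigma> \<sigma>h
           \<and> prefix \<sigma>0 (sub_edge_path \<phi> \<Sigma> (hd \<sigma>h))
           \<and> suffix \<sigma>m (sub_edge_path \<phi> \<Sigma> (last \<sigma>h))
           \<and> \<sigma>0 \<noteq> sub_edge_path \<phi> \<Sigma> (hd \<sigma>h)
           \<and> \<sigma>m \<noteq> sub_edge_path \<phi> \<Sigma> (last \<sigma>h)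
           \<and> immersed (subdiv \<phi> \<Sigma>) (\<sigma>0 @ \<sigma> @ \<sigma>m)
           \<and> sub_path \<phi> \<Sigma> \<sigma>h = \<sigma>0 @ \<sigma> @ \<sigma>m"
proof -
  obtain h \<sigma>0 \<sigma>m where h: "immersed \<Sigma> h"
    and \<sigma>0: "strict_prefix \<sigma>0 (sub_edge_path \<phi> \<Sigma> (hd h))"
    and \<sigma>m: "strict_suffix \<sigma>m (sub_edge_path \<phi> \<Sigma> (last h))"
    and image: "sub_path \<phi> \<Sigma> h = \<sigma>0 @ \<sigma> @ \<sigma>m"
    using immersed_subdiv_has_lift[OF assms(3)] by (auto simp: is_lift_def)
  moreover have "immersed (subdiv \<phi> \<Sigma>) (\<sigma>0 @ \<sigma> @ \<sigma>m)"
    using sub_path_immersed[OF assms(1,2) h] image by simp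
  ultimately show ?thesis
    by (auto simp: strict_prefix_def strict_suffix_def)
qed

end
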